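(* For every finite field $\mathbb{F}_q$, the unit-graph on $\operatorname{Mat}_2(\mathbb{F}_q)$ is strongly regular.
   Context: The unit-graph on $\operatorname{Mat}_2(\mathbb{F}_q)$ is the graph with vertex set $\operatorname{Mat}_2(\mathbb{F}_q)$ in which $A$ and $B$ are adjacent iff $B - A \in \operatorname{GL}_2(\mathbb{F}_q)$. A non-empty, non-complete regular graph is strongly regular with parameters $(n,k,a,c)$ if it has $n$ vertices, is $k$-regular, every pair of distinct adjacent vertices has exactly $a$ common neighbours, and every pair of distinct nonadjacent vertices has exactly $c$ common neighbours. *)

theory Defs
  imports "HOL-Analysis.Analysis"
begin

definition simple_graph :: "'v set \<Rightarrow> ('v \<Rightarrow> 'v \<Rightarrow> bool) \<Rightarrow> bool" where
  "simple_graph V E \<longleftrightarrow>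
     (\<forall>x\<in>V. \<forall>y\<in>V. E x y \<longrightarrow> E y x) \<and> (\<forall>x\<in>V. \<not> E x x)"

definition strongly_regular_with ::
  "'v set \<Rightarrow> ('v \<Rightarrow> 'v \<Rightarrow> bool) \<Rightarrow> nat \<Rightarrow> nat \<Rightarrow> nat \<Rightarrow> nat \<Rightarrow> bool" where
  "strongly_regular_with V E n k a c \<longleftrightarrow>
     simple_graph V E \<and> finite V \<and>
     V \<noteq> {} \<and>
     (\<exists>x\<in>V. \<exists>y\<in>V. x \<noteq> y \<and> \<not> E x y) \<and>
     card V = n \<and>
     (\<forall>x\<in>V. card {y\<in>V. E x y} = k) \<and>
     (\<forall>x\<in>V. \<forall>y\<in>V. x \<noteq> y \<and> E x y \<longrightarrow> card {z\<in>V. E x z \<and> E y z} = a) \<and>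
     (\<forall>x\<in>V. \<forall>y\<in>V. x \<noteq> y \<and> \<not> E x y \<longrightarrow> card {z\<in>V. E x z \<and> E y z} = c)"

definition strongly_regular :: "'v set \<Rightarrow> ('v \<Rightarrow> 'v \<Rightarrow> bool) \<Rightarrow> bool" where
  "strongly_regular V E \<longleftrightarrow> (\<exists>n k a c. strongly_regular_with V E n k a c)"

definition unit_graph_adj :: "'a::field^2^2 \<Rightarrow> 'a^2^2 \<Rightarrow> bool" where
  "unit_graph_adj A B \<longleftrightarrow> invertible (B - A)"

end

theory Submission
  imports Defs
begin

text \<open>The unit-graph is a Cayley graph of the additive group of matrices, so the number of common
neighbours of x and y depends only on D = y - x: it is the number of invertible W with W - D
invertible. This count is unchanged under D \<mapsto> P D Q for invertible P, Q, and a nonzero 2 \<times> 2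
matrix is equivalent in this sense either to the identity (if invertible) or to the matrix unit
E11 (if singular). Hence adjacent pairs share one number of neighbours and distinct
nonadjacent pairs another.\<close>

lemma card_pairs_translate:
  fixes S :: "'a::ab_group_add \<Rightarrow> bool"
  shows "card {z. S (z - x) \<and> S (z - y)} = card {w. S w \<and> S (w - (y - x))}"
proof -
  have "{z. S (z - x) \<and> S (z - y)} = (\<lambda>w. w + x) ` {w. S w \<and> S (w - (y - x))}"
    by (auto simp: image_iff algebra_simps intro!: exI[of _ "_ - x"])
  moreover have "inj (\<lambda>w. w + x)"
    by (simp add: inj_on_def)
  ultimately show ?thesis
    by (simp add: card_image)
qed

lemma matrix_diff_distrib:
  fixes P :: "'a::ring_1^'n^'m" and A B :: "'a^'k^'n" and Q :: "'a^'l^'k"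
  shows "P ** (A - B) ** Q = P ** A ** Q - P ** B ** Q"
  by (simp add: matrix_matrix_mult_def vec_eq_iff sum_subtractf sum_distrib_right algebra_simps)

lemma invertible_uminus:
  fixes A :: "'a::field^'n^'n"
  assumes "invertible A"
  shows "invertible (- A)"
proof -
  obtain B where "A ** B = mat 1" "B ** A = mat 1"
    using assms invertible_def by blast
  then have "(- A) ** (- B) = mat 1" "(- B) ** (- A) = mat 1"
    by (simp_all add: matrix_matrix_mult_def vec_eq_iff sum_negf)
  then show ?thesis
    unfolding invertible_def by blast
qed

lemma invertible_mult_both_iff:
  fixes P W Q :: "'a::field^'n^'n"
  assumes "invertible P" "invertible Q"
  shows "invertible (P ** W ** Q) \<longleftrightarrow> invertible W"
  using assms by (auto simp: invertible_det_nz det_mul)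

definition common_unit_count :: "'a::field^'n^'n \<Rightarrow> nat" where
  "common_unit_count D = card {W. invertible W \<and> invertible (W - D)}"

lemma common_unit_count_equivalent:
  fixes P D Q :: "'a::{field,finite}^'n^'n"
  assumes P: "invertible P" and Q: "invertible Q"
  shows "common_unit_count (P ** D ** Q) = common_unit_count D"
proof -
  define f where "f W = P ** W ** Q" for W :: "'a^'n^'n"
  obtain P' where P': "P' ** P = mat 1"
    using P invertible_left_inverse by blast
  obtain Q' where Q': "Q ** Q' = mat 1"
    using Q invertible_right_inverse by blast
  have "P' ** f W ** Q' = W" for W
    unfolding f_def by (metis P' Q' matrix_mul_assoc matrix_mul_lid matrix_mul_rid)
  then have "inj f"
    by (metis injI)
  then have "surj f"
    by (simp add: finite_UNIV_inj_surj)
  have preimage: "f -` {W. invertible W \<and> invertible (W - P ** D ** Q)}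
                  = {W. invertible W \<and> invertible (W - D)}"
    using P Q by (simp add: f_def invertible_mult_both_iff flip: matrix_diff_distrib)
  have "card (f -` {W. invertible W \<and> invertible (W - P ** D ** Q)})
        = card {W. invertible W \<and> invertible (W - P ** D ** Q)}"
    using \<open>inj f\<close> \<open>surj f\<close> by (intro card_vimage_inj) auto
  from this[unfolded preimage] show ?thesis
    unfolding common_unit_count_def by simp
qed

definition mat2 :: "'a::zero \<Rightarrow> 'a \<Rightarrow> 'a \<Rightarrow> 'a \<Rightarrow> 'a^2^2" where
  "mat2 a b c d = (\<chi> i j. if i = 1 then (if j = 1 then a else b) else (if j = 1 then c else d))"

lemma mat2_nth [simp]:
  "mat2 a b c d $ 1 $ 1 = a" "mat2 a b c d $ 1 $ 2 = b"
  "mat2 a b c d $ 2 $ 1 = c" "mat2 a b c d $ 2 $ 2 = d"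
  by (simp_all add: mat2_def)

lemma mat2_entries: "D = mat2 (D$1$1) (D$1$2) (D$2$1) (D$2$2)"
  by (simp add: vec_eq_iff forall_2)

lemma mat2_mult:
  "mat2 a b c d ** mat2 a' b' c' d' =
     mat2 (a*a' + b*c') (a*b' + b*d') (c*a' + d*c') (c*b' + d*d')"
  by (simp add: vec_eq_iff forall_2 matrix_matrix_mult_def sum_2)

lemma invertible_mat2_iff: "invertible (mat2 a b c d :: 'a::field^2^2) \<longleftrightarrow> a*d - b*c \<noteq> 0"
  by (simp add: invertible_det_nz det_2)

lemma rank_one_normal_form:
  fixes D :: "'a::field^2^2"
  assumes "D \<noteq> 0" "\<not> invertible D"
  shows "\<exists>P Q. invertible P \<and> invertible Q \<and> D = P ** mat2 1 0 0 0 ** Q"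
proof -
  obtain a b c d where D: "D = mat2 a b c d"
    using mat2_entries by blast
  have det0: "a*d = b*c"
    using assms(2) D invertible_mat2_iff by auto
  have nonzero: "a \<noteq> 0 \<or> b \<noteq> 0 \<or> c \<noteq> 0 \<or> d \<noteq> 0"
    using assms(1) D by (auto simp: vec_eq_iff forall_2)
  show ?thesis
  proof (cases "a = 0")
    case False
    then have "d = b*c/a"
      using det0 by (simp add: eq_divide_eq mult.commute)
    then show ?thesis
      using False det0
      by (intro exI[of _ "mat2 a 0 c 1"] exI[of _ "mat2 1 (b/a) 0 1"])
        (auto simp: invertible_mat2_iff D mat2_mult mult.commute)
  next
    case a: True
    consider "b \<noteq> 0" | "b = 0" "c \<noteq> 0" | "b = 0" "c = 0" "d \<noteq> 0"
      using nonzero a by blast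
    then show ?thesis
    proof cases
      case 1
      then have "c = 0"
        using a det0 by simp
      with 1 a show ?thesis
        by (intro exI[of _ "mat2 b 0 d 1"] exI[of _ "mat2 0 1 1 0"])
          (auto simp: invertible_mat2_iff D mat2_mult)
    next
      case 2
      with a show ?thesis
        by (intro exI[of _ "mat2 0 1 c 0"] exI[of _ "mat2 1 (d/c) 0 1"])
          (auto simp: invertible_mat2_iff D mat2_mult)
    next
      case 3
      with a show ?thesis
        by (intro exI[of _ "mat2 0 1 d 0"] exI[of _ "mat2 0 1 1 0"])
          (auto simp: invertible_mat2_iff D mat2_mult)
    qed
  qed
qed

lemma common_unit_count_invertible:
  fixes D :: "'a::{field,finite}^'n^'n"
  assumes "invertible D"
  shows "common_unit_count D = common_unit_count (mat 1 :: 'a^'n^'n)"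
proof -
  have "invertible (mat 1 :: 'a^'n^'n)"
    unfolding invertible_def by auto
  then show ?thesis
    using common_unit_count_equivalent[OF assms, of "mat 1" "mat 1"] by simp
qed

lemma common_unit_count_singular:
  fixes D :: "'a::{field,finite}^2^2"
  assumes "D \<noteq> 0" "\<not> invertible D"
  shows "common_unit_count D = common_unit_count (mat2 1 0 0 0 :: 'a^2^2)"
  using rank_one_normal_form[OF assms] common_unit_count_equivalent by metis

lemma unit_graph_simple: "simple_graph UNIV unit_graph_adj"
  unfolding simple_graph_def unit_graph_adj_def
proof (intro conjI ballI impI)
  fix x y :: "'a^2^2"
  assume "invertible (y - x)"
  then show "invertible (x - y)"
    using invertible_uminus[of "y - x"] by simp
next
  fix x :: "'a^2^2"
  show "\<not> invertible (x - x)"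
    by (simp add: invertible_det_nz det_2)
qed

lemma unit_graph_common_neighbours:
  "card {z. unit_graph_adj x z \<and> unit_graph_adj y z} = common_unit_count (y - x)"
  unfolding unit_graph_adj_def common_unit_count_def
  by (rule card_pairs_translate)

lemma unit_graph_degree:
  fixes x :: "'a::field^2^2"
  shows "card {y. unit_graph_adj x y} = card {W :: 'a^2^2. invertible W}"
  using card_pairs_translate[of invertible x x] by (simp add: unit_graph_adj_def)

lemma unit_graph_not_complete: "\<exists>x y :: 'a::field^2^2. x \<noteq> y \<and> \<not> unit_graph_adj x y"
proof (intro exI conjI)
  show "0 \<noteq> (mat2 1 0 0 0 :: 'a^2^2)"
    by (metis mat2_nth(1) zero_index one_neq_zero)
  show "\<not> unit_graph_adj 0 (mat2 1 0 0 0 :: 'a^2^2)"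
    by (simp add: unit_graph_adj_def invertible_mat2_iff)
qed

theorem corollary3p4:
  shows "strongly_regular (UNIV :: ((('a::{field,finite})^2)^2) set) unit_graph_adj"
  unfolding strongly_regular_def strongly_regular_with_def
proof (intro exI conjI ballI impI)
  fix x y :: "'a^2^2"
  assume "x \<noteq> y \<and> unit_graph_adj x y"
  then show "card {z \<in> UNIV. unit_graph_adj x z \<and> unit_graph_adj y z}
             = common_unit_count (mat 1 :: 'a^2^2)"
    using unit_graph_common_neighbours[of x y] common_unit_count_invertible[of "y - x"]
    by (simp add: unit_graph_adj_def)
next
  fix x y :: "'a^2^2"
  assume "x \<noteq> y \<and> \<not> unit_graph_adj x y"
  then show "card {z \<in> UNIV. unit_graph_adj x z \<and> unit_graph_adj y z}
             = common_unit_count (mat2 1 0 0 0 :: 'a^2^2)"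
    using unit_graph_common_neighbours[of x y] common_unit_count_singular[of "y - x"]
    by (auto simp: unit_graph_adj_def)
qed (use unit_graph_simple unit_graph_degree unit_graph_not_complete in auto)

end
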